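(* For every $n\geq2$, $$\inf_L \rho_{n,L}=\alpha_n,$$ where the infimum is taken over all sequences $L$ of three positive integers such that $UD_n(L)\neq\emptyset$, and $\alpha_2=1/6$, $\alpha_n=(n-2)/n$ for $n>2$.
   Context: Let $X$ be a finite alphabet with $n\geq 2$ letters and $X^*$ the set of words over $X$; $|v|$ is the length of a word $v$. A code over $X$ is a finite sequence $C=(v_1,\ldots,v_m)$ of words over $X$ such that every $w\in X^*$ has at most one factorization into code-words: if $w=v_{i_1}\cdots v_{i_l}=v_{j_1}\cdots v_{j_{l'}}$ with $l,l'\geq1$, then $l=l'$ and $i_t=j_t$ for all $t$. (Codes are sequences, not sets.) A code $C=(v_1,\ldots,v_m)$ is a prefix code if for all $i,j$, $v_i$ is a prefix of $v_j$ if and only if $i=j$. For a finite sequence $L=(a_1,\ldots,a_m)$ of positive integers, $UD_n(L)$ is the set of all codes $(v_1,\ldots,v_m)$ over an $n$-letter alphabet with $|v_i|=a_i$ for all $i$, $PR_n(L)\subseteq UD_n(L)$ is the subset of prefix codes, and $\rho_{n,L}=|PR_n(L)|/|UD_n(L)|$ (defined when $UD_n(L)\ne\emptyset$). *)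

theory Defs
  imports Complex_Main "HOL-Library.Sublist"
begin

definition word_over :: "nat \<Rightarrow> nat list \<Rightarrow> bool" where
  "word_over n w \<longleftrightarrow> (\<forall>x\<in>set w. x < n)"

definition is_code :: "nat \<Rightarrow> nat list list \<Rightarrow> bool" where
  "is_code n C \<longleftrightarrow> (\<forall>w\<in>set C. word_over n w) \<and>
     (\<forall>is js. is \<noteq> [] \<longrightarrow> js \<noteq> [] \<longrightarrow>
        (\<forall>i\<in>set is. i < length C) \<longrightarrow> (\<forall>j\<in>set js. j < length C) \<longrightarrow>
        concat (map (\<lambda>i. C ! i) is) = concat (map (\<lambda>j. C ! j) js) \<longrightarrow> is = js)"

definition is_prefix_code :: "nat list list \<Rightarrow> bool" where
  "is_prefix_code C \<longleftrightarrow>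
     (\<forall>i<length C. \<forall>j<length C. prefix (C ! i) (C ! j) \<longleftrightarrow> i = j)"

definition UD :: "nat \<Rightarrow> nat list \<Rightarrow> nat list list set" where
  "UD n L = {C. length C = length L \<and> (\<forall>i<length L. length (C ! i) = L ! i) \<and> is_code n C}"

definition PR :: "nat \<Rightarrow> nat list \<Rightarrow> nat list list set" where
  "PR n L = {C \<in> UD n L. is_prefix_code C}"

definition rho :: "nat \<Rightarrow> nat list \<Rightarrow> real" where
  "rho n L = real (card (PR n L)) / real (card (UD n L))"

definition alpha :: "nat \<Rightarrow> real" where
  "alpha n = (if n = 2 then 1 / 6 else (real n - 2) / real n)"

end

theory Submission
  imports Defs
begin

text \<open>Since \<open>\<rho>\<close> is invariant under permuting \<open>L\<close>, assume \<open>a \<le> b \<le> c\<close>. Prefix codes are counted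
  exactly, \<open>n\<^sup>a (n\<^sup>b - n\<^bsup>b-a\<^esup>) (n\<^sup>c - n\<^bsup>c-a\<^esup> - n\<^bsup>c-b\<^esup>)\<close>, while there are at most \<open>n\<^bsup>a+b+c\<^esup>\<close> codes; this already gives
  \<open>\<rho> \<ge> \<alpha>\<^sub>n\<close> except for \<open>(a, b) = (1, 1)\<close> and, when \<open>n = 2\<close>, \<open>(a, b) = (1, 2)\<close>. There the codes \<open>[u, v, w]\<close> are
  counted more precisely: \<open>w = q @ r\<close> with \<open>q\<close> factorizing over \<open>{u, v}\<close> and \<open>r\<close> prefix-incomparable
  with \<open>u\<close> and \<open>v\<close> always gives a code, by a Sardinas--Patterson argument. For \<open>L = [1, 1, c]\<close> this
  yields \<open>\<rho> = \<alpha>\<^sub>n / (1 - (2/n)\<^sup>c)\<close>, and for \<open>n = 2\<close>, \<open>L = [1, 2, c]\<close> all but \<open>O((7/4)\<^sup>c)\<close> binary words \<open>w\<close>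
  complete each admissible pair \<open>u, v\<close>, so that \<open>\<rho> \<le> 1 / (6 (1 - 2 (7/8)\<^sup>c))\<close>; letting \<open>c \<rightarrow> \<infinity>\<close> shows
  that \<open>\<alpha>\<^sub>n\<close> is the infimum.\<close>

section \<open>Unique decipherability via dangling suffixes\<close>

lemma dangling_suffix_append_neq_concat:
  assumes C_ne: "\<forall>v\<in>set C. v \<noteq> []" and D_ne: "\<forall>d\<in>D. d \<noteq> []" and D_C: "D \<inter> set C = {}"
    and D_left: "\<And>d c e. d \<in> D \<Longrightarrow> c \<in> set C \<Longrightarrow> e \<noteq> [] \<Longrightarrow> c = d @ e \<Longrightarrow> e \<in> D"
    and D_right: "\<And>d c e. d \<in> D \<Longrightarrow> c \<in> set C \<Longrightarrow> e \<noteq> [] \<Longrightarrow> d = c @ e \<Longrightarrow> e \<in> D"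
  shows "d \<in> D \<Longrightarrow> set us \<subseteq> set C \<Longrightarrow> set vs \<subseteq> set C \<Longrightarrow> vs \<noteq> [] \<Longrightarrow> d @ concat us \<noteq> concat vs"
proof (induction "length (concat vs)" arbitrary: d us vs rule: less_induct)
  case less
  then obtain v vs' where vs: "vs = v # vs'" by (cases vs) auto
  have v: "v \<in> set C" "v \<noteq> []" and vs': "set vs' \<subseteq> set C" using less.prems vs C_ne by auto
  have d: "d \<noteq> []" "d \<notin> set C" using D_ne D_C less.prems(1) by auto
  show ?case
  proof
    assume "d @ concat us = concat vs"
    then obtain e where "v = d @ e \<and> concat us = e @ concat vs' \<or> d = v @ e \<and> e @ concat us = concat vs'"
      using vs by (auto simp: append_eq_append_conv2)
    then show False
    proof (elim disjE conjE)
      assume v_eq: "v = d @ e" and us_eq: "concat us = e @ concat vs'"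
      have "e \<noteq> []" using v_eq d v by auto
      then have "e \<in> D" "us \<noteq> []" using D_left[OF less.prems(1) v(1) _ v_eq] us_eq by auto
      moreover have "length (concat us) < length (concat vs)" using us_eq v_eq vs d by simp
      ultimately show False using less.hyps vs' less.prems(2) us_eq by metis
    next
      assume d_eq: "d = v @ e" and vs'_eq: "e @ concat us = concat vs'"
      have "e \<noteq> []" using d_eq d v by auto
      then have "e \<in> D" "vs' \<noteq> []" using D_right[OF less.prems(1) v(1) _ d_eq] vs'_eq by auto
      moreover have "length (concat vs') < length (concat vs)" using vs v by simp
      ultimately show False using less.hyps vs' less.prems(2) vs'_eq by metis
    qed
  qed
qed

lemma factorization_unique_if_no_dangling:
  assumes C_ne: "\<forall>v\<in>set C. v \<noteq> []" and "distinct C"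
    and D_init: "\<And>c\<^sub>1 c\<^sub>2 e. c\<^sub>1 \<in> set C \<Longrightarrow> c\<^sub>2 \<in> set C \<Longrightarrow> e \<noteq> [] \<Longrightarrow> c\<^sub>2 = c\<^sub>1 @ e \<Longrightarrow> e \<in> D"
    and no_dangling: "\<And>d us vs. d \<in> D \<Longrightarrow> set us \<subseteq> set C \<Longrightarrow> set vs \<subseteq> set C \<Longrightarrow> vs \<noteq> [] \<Longrightarrow>
      d @ concat us \<noteq> concat vs"
    and "\<forall>i\<in>set is. i < length C" "\<forall>j\<in>set js. j < length C"
    and "concat (map ((!) C) is) = concat (map ((!) C) js)"
  shows "is = js"
proof -
  let ?w = "\<lambda>is. concat (map ((!) C) is)"
  have ne: "?w is \<noteq> []" if "is \<noteq> []" "\<forall>i\<in>set is. i < length C" for "is"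
    using that C_ne by (cases "is") auto
  show ?thesis
    using assms(5-7)
  proof (induction "is" arbitrary: js)
    case Nil
    then show ?case using ne[of js] by auto
  next
    case (Cons i is')
    then obtain j js' where js: "js = j # js'" using ne[of "i # is'"] by (cases js) simp_all
    have ij: "C ! i \<in> set C" "C ! j \<in> set C" "set (map ((!) C) is') \<subseteq> set C" "set (map ((!) C) js') \<subseteq> set C"
      using Cons.prems js by auto
    have eq: "C ! i @ ?w is' = C ! j @ ?w js'" using Cons.prems(3) js by simp
    show ?case
    proof (cases "i = j")
      case True
      then have "?w is' = ?w js'" using eq by simp
      then show ?thesis using Cons.IH[of js'] Cons.prems True js by simp
    next
      case False
      then have neq: "C ! i \<noteq> C ! j" using \<open>distinct C\<close> Cons.prems js by (simp add: nth_eq_iff_index_eq)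
      obtain e where "C ! i = C ! j @ e \<and> e @ ?w is' = ?w js' \<or> C ! i @ e = C ! j \<and> ?w is' = e @ ?w js'"
        using eq by (auto simp: append_eq_append_conv2)
      then show ?thesis
      proof (elim disjE conjE)
        assume c_eq: "C ! i = C ! j @ e" and rest: "e @ ?w is' = ?w js'"
        then have "e \<noteq> []" using neq by auto
        then have "e \<in> D" "map ((!) C) js' \<noteq> []" using D_init[OF ij(2,1) _ c_eq] rest by auto
        from no_dangling[OF this(1) ij(3,4) this(2)] rest show ?thesis by simp
      next
        assume c_eq: "C ! i @ e = C ! j" and rest: "?w is' = e @ ?w js'"
        then have "e \<noteq> []" using neq by auto
        then have "e \<in> D" "map ((!) C) is' \<noteq> []" using D_init[OF ij(1,2) _ c_eq[symmetric]] rest by auto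
        from no_dangling[OF this(1) ij(4,3) this(2)] rest show ?thesis by simp
      qed
    qed
  qed
qed

text \<open>A set \<open>D\<close> containing every proper dangling suffix \<open>e\<close> of two code-words \<open>c\<^sub>2 = c\<^sub>1 @ e\<close> and closed
  under the two residual operations witnesses unique decipherability (Sardinas--Patterson): a double
  factorization would, after cancelling the common first word, start with an element of \<open>D\<close>.\<close>
lemma is_code_if_dangling_suffixes_closed:
  assumes "\<forall>v\<in>set C. word_over n v" and C_ne: "\<forall>v\<in>set C. v \<noteq> []" and "distinct C"
    and D_ne: "\<forall>d\<in>D. d \<noteq> []" and D_C: "D \<inter> set C = {}"
    and D_init: "\<And>c\<^sub>1 c\<^sub>2 e. c\<^sub>1 \<in> set C \<Longrightarrow> c\<^sub>2 \<in> set C \<Longrightarrow> e \<noteq> [] \<Longrightarrow> c\<^sub>2 = c\<^sub>1 @ e \<Longrightarrow> e \<in> D"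
    and D_left: "\<And>d c e. d \<in> D \<Longrightarrow> c \<in> set C \<Longrightarrow> e \<noteq> [] \<Longrightarrow> c = d @ e \<Longrightarrow> e \<in> D"
    and D_right: "\<And>d c e. d \<in> D \<Longrightarrow> c \<in> set C \<Longrightarrow> e \<noteq> [] \<Longrightarrow> d = c @ e \<Longrightarrow> e \<in> D"
  shows "is_code n C"
proof -
  have no_dangling: "d @ concat us \<noteq> concat vs"
    if "d \<in> D" "set us \<subseteq> set C" "set vs \<subseteq> set C" "vs \<noteq> []" for d us vs
    using C_ne D_ne D_C D_left D_right that by (rule dangling_suffix_append_neq_concat)
  have "is = js" if "\<forall>i\<in>set is. i < length C" "\<forall>j\<in>set js. j < length C"
    "concat (map ((!) C) is) = concat (map ((!) C) js)" for "is" js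
    using C_ne \<open>distinct C\<close> D_init no_dangling that by (rule factorization_unique_if_no_dangling)
  then show ?thesis unfolding is_code_def using assms(1) by blast
qed

lemma prefix_code_imp_is_code:
  assumes "\<forall>v\<in>set C. word_over n v" "\<forall>v\<in>set C. v \<noteq> []" and prefix_code: "is_prefix_code C"
  shows "is_code n C"
proof (rule is_code_if_dangling_suffixes_closed[where D = "{}"])
  show "distinct C"
    using prefix_code unfolding distinct_conv_nth is_prefix_code_def by (metis prefix_order.refl)
  fix c\<^sub>1 c\<^sub>2 e assume "c\<^sub>1 \<in> set C" "c\<^sub>2 \<in> set C" "e \<noteq> []" "c\<^sub>2 = c\<^sub>1 @ e"
  then show "e \<in> {}"
    using prefix_code unfolding is_prefix_code_def in_set_conv_nth by (metis prefixI self_append_conv)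
qed (use assms in auto)

lemma is_codeD:
  assumes "is_code n C" "is \<noteq> []" "js \<noteq> []" "\<forall>i\<in>set is. i < length C" "\<forall>j\<in>set js. j < length C"
    and "concat (map ((!) C) is) = concat (map ((!) C) js)"
  shows "is = js"
  using assms unfolding is_code_def by blast

lemma is_code_imp_distinct:
  assumes "is_code n C"
  shows "distinct C"
  unfolding distinct_conv_nth
proof (intro allI impI)
  fix i j assume "i < length C" "j < length C" "i \<noteq> j"
  then show "C ! i \<noteq> C ! j" using is_codeD[OF assms, of "[i]" "[j]"] by auto
qed

lemma is_code_single_factorization:
  assumes "is_code n C" "i < length C" "\<forall>j\<in>set js. j < length C" "js \<noteq> []"
    and "concat (map ((!) C) js) = C ! i"
  shows "js = [i]"
  using is_codeD[OF assms(1), of js "[i]"] assms(2-) by simp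

lemma is_code_map_rev:
  assumes "is_code n C"
  shows "is_code n (map rev C)"
  unfolding is_code_def
proof (intro conjI allI impI)
  show "\<forall>w\<in>set (map rev C). word_over n w"
    using assms unfolding is_code_def word_over_def by auto
  have rev_concat_map: "rev (concat (map ((!) (map rev C)) ks)) = concat (map ((!) C) (rev ks))"
    if "\<forall>i\<in>set ks. i < length C" for ks
    using that by (induction ks) auto
  fix "is" js
  assume ne: "is \<noteq> []" "js \<noteq> []"
    and bounds: "\<forall>i\<in>set is. i < length (map rev C)" "\<forall>j\<in>set js. j < length (map rev C)"
    and eq: "concat (map ((!) (map rev C)) is) = concat (map ((!) (map rev C)) js)"
  have "concat (map ((!) C) (rev is)) = concat (map ((!) C) (rev js))"
    using arg_cong[OF eq, of rev] rev_concat_map[of "is"] rev_concat_map[of js] bounds by simp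
  then have "rev is = rev js" using is_codeD[OF assms, of "rev is" "rev js"] ne bounds by simp
  then show "is = js" by simp
qed

lemma is_code_permute:
  assumes code: "is_code n C" and "distinct p" and p: "\<forall>i\<in>set p. i < length C"
  shows "is_code n (map ((!) C) p)"
  unfolding is_code_def
proof (intro conjI allI impI)
  show "\<forall>w\<in>set (map ((!) C) p). word_over n w" using code p unfolding is_code_def by auto
  have reindex: "map ((!) (map ((!) C) p)) ks = map ((!) C) (map ((!) p) ks)"
    if "\<forall>i\<in>set ks. i < length p" for ks
    using that by (induction ks) auto
  fix "is" js
  assume ne: "is \<noteq> []" "js \<noteq> []"
    and "\<forall>i\<in>set is. i < length (map ((!) C) p)" "\<forall>j\<in>set js. j < length (map ((!) C) p)"
    and eq: "concat (map ((!) (map ((!) C) p)) is) = concat (map ((!) (map ((!) C) p)) js)"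
  then have bounds: "\<forall>i\<in>set is. i < length p" "\<forall>j\<in>set js. j < length p" by auto
  have "concat (map ((!) C) (map ((!) p) is)) = concat (map ((!) C) (map ((!) p) js))"
    using eq unfolding reindex[OF bounds(1)] reindex[OF bounds(2)] .
  then have "map ((!) p) is = map ((!) p) js"
    using is_codeD[OF code, of "map ((!) p) is" "map ((!) p) js"] ne p bounds by auto
  moreover have "inj_on ((!) p) (set is \<union> set js)"
    using inj_on_nth[OF \<open>distinct p\<close>, of "set is \<union> set js"] bounds by auto
  ultimately show "is = js" using map_inj_on by blast
qed

lemma is_prefix_code_permute:
  assumes "is_prefix_code C" "distinct p" "\<forall>i\<in>set p. i < length C"
  shows "is_prefix_code (map ((!) C) p)"
  using assms unfolding is_prefix_code_def by (auto simp: nth_eq_iff_index_eq)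

section \<open>Factorizations over two prefix-incomparable words\<close>

definition star :: "'a list set \<Rightarrow> 'a list set" where
  "star X = concat ` lists X"

lemma Nil_in_star [simp]: "[] \<in> star X"
  unfolding star_def by (metis concat.simps(1) image_eqI lists.Nil)

lemma append_in_star: "p \<in> star X \<Longrightarrow> q \<in> star X \<Longrightarrow> p @ q \<in> star X"
  unfolding star_def by (auto intro!: image_eqI[where x = "_ @ _"])

lemma in_star_if_in: "k \<in> X \<Longrightarrow> k \<in> star X"
  unfolding star_def by (auto intro!: image_eqI[where x = "[k]"])

lemma star_cases:
  assumes "q \<in> star X"
  obtains "q = []" | k q' where "k \<in> X" "q' \<in> star X" "q = k @ q'"
proof -
  obtain ks where "ks \<in> lists X" "q = concat ks" using assms unfolding star_def by blast
  then show thesis using that unfolding star_def by (cases ks) auto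
qed

lemma set_star_subset: "q \<in> star X \<Longrightarrow> set q \<subseteq> \<Union> (set ` X)"
  unfolding star_def by fastforce

locale prefix_incomparable_pair =
  fixes x y :: "nat list"
  assumes x_ne: "x \<noteq> []" and y_ne: "y \<noteq> []"
    and not_prefix_xy: "\<not> prefix x y" and not_prefix_yx: "\<not> prefix y x"
begin

lemma prefix_pair_eq: "k \<in> {x, y} \<Longrightarrow> c \<in> {x, y} \<Longrightarrow> prefix k c \<Longrightarrow> k = c"
  using not_prefix_xy not_prefix_yx by auto

lemma common_prefix_pair_eq: "k \<in> {x, y} \<Longrightarrow> c \<in> {x, y} \<Longrightarrow> prefix k s \<Longrightarrow> prefix c s \<Longrightarrow> k = c"
  using prefix_pair_eq prefix_same_cases by metis

lemma star_append_not_prefix_pair: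
  assumes q: "q \<in> star {x, y}" and "r \<noteq> []" and r: "\<forall>c\<in>{x, y}. \<not> prefix c r \<and> \<not> prefix r c"
    and c: "c \<in> {x, y}"
  shows "\<not> prefix (q @ r) c"
  using q
proof (cases rule: star_cases)
  case 1
  then show ?thesis using r c by auto
next
  case (2 k q')
  show ?thesis
  proof
    assume pre: "prefix (q @ r) c"
    then have "prefix k c" using 2 by (metis append.assoc prefixI prefix_order.trans)
    then have "k = c" using prefix_pair_eq 2 c by blast
    then show False using pre 2 \<open>r \<noteq> []\<close> by (auto simp: prefix_def)
  qed
qed

lemma star_factorization_unique:
  assumes "q\<^sub>1 \<in> star {x, y}" "q\<^sub>2 \<in> star {x, y}" "q\<^sub>1 @ r\<^sub>1 = q\<^sub>2 @ r\<^sub>2"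
    and "\<forall>c\<in>{x, y}. \<not> prefix c r\<^sub>1" "\<forall>c\<in>{x, y}. \<not> prefix c r\<^sub>2"
  shows "q\<^sub>1 = q\<^sub>2"
  using assms
proof (induction "length q\<^sub>1 + length q\<^sub>2" arbitrary: q\<^sub>1 q\<^sub>2 rule: less_induct)
  case less
  consider "q\<^sub>1 = []" "q\<^sub>2 = []"
    | k q\<^sub>2' where "q\<^sub>1 = []" "k \<in> {x, y}" "q\<^sub>2 = k @ q\<^sub>2'"
    | k q\<^sub>1' where "q\<^sub>2 = []" "k \<in> {x, y}" "q\<^sub>1 = k @ q\<^sub>1'"
    | k\<^sub>1 q\<^sub>1' k\<^sub>2 q\<^sub>2' where "k\<^sub>1 \<in> {x, y}" "q\<^sub>1' \<in> star {x, y}" "q\<^sub>1 = k\<^sub>1 @ q\<^sub>1'"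
        "k\<^sub>2 \<in> {x, y}" "q\<^sub>2' \<in> star {x, y}" "q\<^sub>2 = k\<^sub>2 @ q\<^sub>2'"
    by (rule star_cases[OF less.prems(1)]; rule star_cases[OF less.prems(2)]; blast)
  then show ?case
  proof cases
    case (4 k\<^sub>1 q\<^sub>1' k\<^sub>2 q\<^sub>2')
    then have "k\<^sub>1 = k\<^sub>2" using common_prefix_pair_eq[of k\<^sub>1 k\<^sub>2 "q\<^sub>1 @ r\<^sub>1"] less.prems(3) by simp
    then have "q\<^sub>1' @ r\<^sub>1 = q\<^sub>2' @ r\<^sub>2" using 4 less.prems(3) by simp
    moreover have "length q\<^sub>1' + length q\<^sub>2' < length q\<^sub>1 + length q\<^sub>2" using 4 x_ne y_ne by auto
    ultimately show ?thesis using less.hyps 4 less.prems(4,5) \<open>k\<^sub>1 = k\<^sub>2\<close> by blast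
  qed (use less.prems(3-5) in auto)
qed

end

locale pair_extension = prefix_incomparable_pair +
  fixes q r :: "nat list"
  assumes q_star: "q \<in> star {x, y}" and r_ne: "r \<noteq> []"
    and r_incomparable: "\<forall>c\<in>{x, y}. \<not> prefix c r \<and> \<not> prefix r c"
begin

text \<open>The dangling suffixes of the code \<open>[x, y, q @ r]\<close>: the tails of \<open>q @ r\<close> left over after
  parsing a nonempty block of \<open>x\<close>'s and \<open>y\<close>'s.\<close>
definition dangling :: "nat list set" where
  "dangling = {q' @ r | p q'. q = p @ q' \<and> p \<noteq> [] \<and> p \<in> star {x, y} \<and> q' \<in> star {x, y}}"

lemma not_prefix_star_append_r: "q' \<in> star {x, y} \<Longrightarrow> c \<in> {x, y} \<Longrightarrow> \<not> prefix (q' @ r) c"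
  by (rule star_append_not_prefix_pair[OF _ r_ne r_incomparable])

lemma dangling_ne: "e \<in> dangling \<Longrightarrow> e \<noteq> []"
  using r_ne unfolding dangling_def by auto

lemma dangling_disjoint: "dangling \<inter> set [x, y, q @ r] = {}"
proof -
  have "e \<notin> {x, y}" if e: "e \<in> dangling" for e
  proof -
    obtain q' where "e = q' @ r" "q' \<in> star {x, y}" using e unfolding dangling_def by blast
    then show ?thesis using not_prefix_star_append_r[of q'] by (metis prefix_order.refl)
  qed
  moreover have "q @ r \<notin> dangling" unfolding dangling_def by auto
  ultimately show ?thesis by auto
qed

lemma dangling_init:
  assumes c\<^sub>1: "c\<^sub>1 \<in> set [x, y, q @ r]" and c\<^sub>2: "c\<^sub>2 \<in> set [x, y, q @ r]" and "e \<noteq> []"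
    and c\<^sub>2_eq: "c\<^sub>2 = c\<^sub>1 @ e"
  shows "e \<in> dangling"
proof -
  have "prefix c\<^sub>1 c\<^sub>2" using c\<^sub>2_eq by simp
  have "c\<^sub>2 = q @ r"
  proof (rule ccontr)
    assume "c\<^sub>2 \<noteq> q @ r"
    then have c\<^sub>2_pair: "c\<^sub>2 \<in> {x, y}" using c\<^sub>2 by auto
    show False
    proof (cases "c\<^sub>1 = q @ r")
      case True
      then show False using not_prefix_star_append_r[OF q_star c\<^sub>2_pair] \<open>prefix c\<^sub>1 c\<^sub>2\<close> by simp
    next
      case False
      then have "c\<^sub>1 \<in> {x, y}" using c\<^sub>1 by simp
      then have "c\<^sub>1 = c\<^sub>2" using c\<^sub>2_pair \<open>prefix c\<^sub>1 c\<^sub>2\<close> by (rule prefix_pair_eq)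
      then show False using c\<^sub>2_eq \<open>e \<noteq> []\<close> by simp
    qed
  qed
  then have c\<^sub>1_pair: "c\<^sub>1 \<in> {x, y}" using c\<^sub>1 c\<^sub>2_eq \<open>e \<noteq> []\<close> by auto
  from q_star show ?thesis
  proof (cases rule: star_cases)
    case 1
    then have "prefix c\<^sub>1 r" using \<open>c\<^sub>2 = q @ r\<close> \<open>prefix c\<^sub>1 c\<^sub>2\<close> by simp
    then show ?thesis using r_incomparable c\<^sub>1_pair by blast
  next
    case (2 k q')
    have "k = c\<^sub>1"
      using 2(1) c\<^sub>1_pair by (rule common_prefix_pair_eq[where s = "q @ r"])
        (use 2 \<open>c\<^sub>2 = q @ r\<close> \<open>prefix c\<^sub>1 c\<^sub>2\<close> in simp_all)
    then have "e = q' @ r" using 2 \<open>c\<^sub>2 = q @ r\<close> c\<^sub>2_eq by simp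
    moreover have "k \<in> star {x, y}" "k \<noteq> []" using 2(1) x_ne y_ne in_star_if_in[OF 2(1)] by auto
    ultimately show ?thesis unfolding dangling_def using 2 by blast
  qed
qed

lemma dangling_left:
  assumes "d \<in> dangling" "c \<in> set [x, y, q @ r]" "e \<noteq> []" "c = d @ e"
  shows "e \<in> dangling"
proof -
  obtain p q' where d: "d = q' @ r" "q = p @ q'" "p \<noteq> []" "q' \<in> star {x, y}"
    using assms(1) unfolding dangling_def by blast
  have "prefix (q' @ r) c" using assms(4) d(1) by simp
  then have "c \<notin> {x, y}" using not_prefix_star_append_r[OF d(4)] by blast
  then have "q @ r = q' @ (r @ e)" using assms(2,4) d(1) by simp
  moreover have "\<forall>c\<in>{x, y}. \<not> prefix c (r @ e)"
    using r_incomparable prefix_same_cases[of _ "r @ e" r] by auto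
  ultimately have "q = q'" using star_factorization_unique[OF q_star d(4)] r_incomparable by blast
  then show ?thesis using d(2,3) by simp
qed

lemma dangling_right:
  assumes "d \<in> dangling" "c \<in> set [x, y, q @ r]" "e \<noteq> []" "d = c @ e"
  shows "e \<in> dangling"
proof -
  obtain p q' where d: "d = q' @ r" "q = p @ q'" "p \<noteq> []" "p \<in> star {x, y}" "q' \<in> star {x, y}"
    using assms(1) unfolding dangling_def by blast
  have "length d < length (q @ r)" using d(1-3) by simp
  then have "c \<noteq> q @ r" using assms(4) by auto
  then have c: "c \<in> {x, y}" using assms(2) by simp
  from d(5) show ?thesis
  proof (cases rule: star_cases)
    case 1
    then show ?thesis using d(1) assms(4) c r_incomparable by (auto simp: prefix_def)
  next
    case (2 k q'')
    have "prefix c d" using assms(4) by simp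
    then have "k = c"
      using 2(1) c by (intro common_prefix_pair_eq[where s = d]) (use 2 d(1) in simp_all)
    then have "e = q'' @ r" "q = (p @ c) @ q''" using 2 d(1,2) assms(4) by auto
    moreover have "p @ c \<in> star {x, y}" using append_in_star[OF d(4) in_star_if_in[OF c]] .
    ultimately show ?thesis unfolding dangling_def using 2 d(3) by blast
  qed
qed

lemma is_code_extension:
  assumes "word_over n x" "word_over n y" "word_over n (q @ r)"
  shows "is_code n [x, y, q @ r]"
proof (rule is_code_if_dangling_suffixes_closed[where D = dangling])
  show "distinct [x, y, q @ r]"
    using not_prefix_xy not_prefix_star_append_r[OF q_star, of x] not_prefix_star_append_r[OF q_star, of y]
    by auto
  show "\<forall>v\<in>set [x, y, q @ r]. word_over n v" using assms by simp
  show "\<forall>v\<in>set [x, y, q @ r]. v \<noteq> []" using x_ne y_ne r_ne by simp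
  show "\<forall>d\<in>dangling. d \<noteq> []" using dangling_ne by blast
qed (fact dangling_disjoint dangling_init dangling_left dangling_right)+

end

section \<open>Permuting the word lengths\<close>

lemma UD_permute:
  assumes "distinct p" "\<forall>i\<in>set p. i < length L" "C \<in> UD n L"
  shows "map ((!) C) p \<in> UD n (map ((!) L) p)"
  using assms is_code_permute unfolding UD_def by auto

lemma PR_permute:
  assumes "distinct p" "\<forall>i\<in>set p. i < length L" "C \<in> PR n L"
  shows "map ((!) C) p \<in> PR n (map ((!) L) p)"
  using assms UD_permute is_prefix_code_permute unfolding PR_def UD_def by auto

lemma map_nth_involution:
  assumes "\<forall>i<length p. p ! i < length p \<and> p ! (p ! i) = i" "length X = length p"
  shows "map ((!) (map ((!) X) p)) p = X"
  using assms by (intro nth_equalityI) auto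

lemma involution_distinct:
  assumes "\<forall>i<length p. p ! i < length p \<and> p ! (p ! i) = i"
  shows "distinct p"
  using assms unfolding distinct_conv_nth by metis

lemma
  assumes inv: "\<forall>i<length p. p ! i < length p \<and> p ! (p ! i) = i" and len: "length p = length L"
  shows bij_betw_UD_permute_involution: "bij_betw (\<lambda>C. map ((!) C) p) (UD n L) (UD n (map ((!) L) p))"
    and bij_betw_PR_permute_involution: "bij_betw (\<lambda>C. map ((!) C) p) (PR n L) (PR n (map ((!) L) p))"
proof -
  have "distinct p" using involution_distinct[OF inv] .
  have p: "\<forall>i\<in>set p. i < length L" "\<forall>i\<in>set p. i < length (map ((!) L) p)"
    using inv len by (auto simp: in_set_conv_nth)
  have map_back: "map ((!) (map ((!) X) p)) p = X" if "length X = length L" for X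
    using map_nth_involution[OF inv] that len by simp
  have map_back_UD: "map ((!) (map ((!) C) p)) p = C" if "C \<in> UD n L \<union> UD n (map ((!) L) p)" for C
    using that map_back len unfolding UD_def by auto
  show "bij_betw (\<lambda>C. map ((!) C) p) (UD n L) (UD n (map ((!) L) p))"
    using UD_permute[OF \<open>distinct p\<close> p(1)] UD_permute[OF \<open>distinct p\<close> p(2)] map_back[of L] map_back_UD
    by (intro bij_betw_byWitness[where f' = "\<lambda>C. map ((!) C) p"]) auto
  show "bij_betw (\<lambda>C. map ((!) C) p) (PR n L) (PR n (map ((!) L) p))"
    using PR_permute[OF \<open>distinct p\<close> p(1)] PR_permute[OF \<open>distinct p\<close> p(2)] map_back[of L] map_back_UD
    by (intro bij_betw_byWitness[where f' = "\<lambda>C. map ((!) C) p"]) (auto simp: PR_def)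
qed

lemma rho_permute_involution:
  assumes "\<forall>i<length p. p ! i < length p \<and> p ! (p ! i) = i" "length p = length L"
  shows "rho n (map ((!) L) p) = rho n L"
  using bij_betw_same_card[OF bij_betw_UD_permute_involution[OF assms]]
    bij_betw_same_card[OF bij_betw_PR_permute_involution[OF assms]]
  unfolding rho_def by simp

lemma UD_permute_involution_empty_iff:
  assumes "\<forall>i<length p. p ! i < length p \<and> p ! (p ! i) = i" "length p = length L"
  shows "UD n (map ((!) L) p) = {} \<longleftrightarrow> UD n L = {}"
  using bij_betw_imp_surj_on[OF bij_betw_UD_permute_involution[OF assms]] by (metis image_is_empty)

lemma sorted_triple_wlog:
  fixes a b c :: nat
  assumes swap_12: "\<And>a b c. P [a, b, c] \<Longrightarrow> P [b, a, c]"
    and swap_23: "\<And>a b c. P [a, b, c] \<Longrightarrow> P [a, c, b]"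
    and sorted: "\<And>a b c. a \<le> b \<Longrightarrow> b \<le> c \<Longrightarrow> P [a, b, c]"
  shows "P [a, b, c]"
proof -
  consider "a \<le> b" "b \<le> c" | "a \<le> c" "c < b" | "b < a" "a \<le> c" | "b \<le> c" "c < a"
    | "c < a" "a \<le> b" | "c < b" "b < a"
    by linarith
  then show ?thesis
    by cases (metis sorted swap_12 swap_23 less_imp_le)+
qed

section \<open>Counting words and prefix codes\<close>

definition words :: "nat \<Rightarrow> nat \<Rightarrow> nat list set" where
  "words n l = {w. length w = l \<and> word_over n w}"

lemma words_eq: "words n l = {w. set w \<subseteq> {..<n} \<and> length w = l}"
  by (auto simp: words_def word_over_def)

lemma finite_words [simp]: "finite (words n l)"
  unfolding words_eq by (rule finite_lists_length_eq) simp

lemma card_words: "card (words n l) = n ^ l"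
  unfolding words_eq by (subst card_lists_length_eq) simp_all

lemma card_words_with_prefix:
  assumes "u \<in> words n a" "a \<le> c"
  shows "card {w \<in> words n c. prefix u w} = n ^ (c - a)"
proof -
  have "{w \<in> words n c. prefix u w} = (\<lambda>r. u @ r) ` words n (c - a)"
    using assms by (auto simp: words_def word_over_def prefix_def)
  moreover have "inj_on (\<lambda>r. u @ r) (words n (c - a))" by (auto simp: inj_on_def)
  ultimately show ?thesis by (simp add: card_image card_words)
qed

definition triple_list :: "'a \<times> 'a \<times> 'a \<Rightarrow> 'a list" where
  "triple_list = (\<lambda>(u, v, w). [u, v, w])"

lemma card_image_triple_list: "card (triple_list ` S) = card S"
  by (rule card_image) (auto simp: inj_on_def triple_list_def)

lemma UD_3_eq:
  "UD n [a, b, c] =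
    triple_list ` {(u, v, w). u \<in> words n a \<and> v \<in> words n b \<and> w \<in> words n c \<and> is_code n [u, v, w]}"
proof (intro equalityI subsetI)
  fix C assume C: "C \<in> UD n [a, b, c]"
  then obtain u v w where "C = [u, v, w]" unfolding UD_def by (auto simp: numeral_3_eq_3 length_Suc_conv)
  with C show "C \<in> triple_list ` {(u, v, w). u \<in> words n a \<and> v \<in> words n b \<and> w \<in> words n c \<and> is_code n [u, v, w]}"
    unfolding UD_def words_def triple_list_def is_code_def by (auto intro!: image_eqI[of _ _ "(u, v, w)"])
qed (auto simp: UD_def words_def triple_list_def less_Suc_eq numeral_3_eq_3)

lemma PR_3_eq:
  "PR n [a, b, c] = triple_list ` {(u, v, w). u \<in> words n a \<and> v \<in> words n b \<and> w \<in> words n c \<and>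
     is_code n [u, v, w] \<and> is_prefix_code [u, v, w]}"
  unfolding PR_def UD_3_eq by (auto simp: triple_list_def intro!: image_eqI[where x = "(_, _, _)"])

lemma UD_3_subset: "UD n [a, b, c] \<subseteq> triple_list ` (words n a \<times> words n b \<times> words n c)"
  unfolding UD_3_eq by auto

lemma finite_UD_3: "finite (UD n [a, b, c])"
  using UD_3_subset by (rule finite_subset) auto

lemma card_UD_3_le: "card (UD n [a, b, c]) \<le> n ^ a * n ^ b * n ^ c"
proof -
  have "card (UD n [a, b, c]) \<le> card (triple_list ` (words n a \<times> words n b \<times> words n c))"
    using UD_3_subset by (rule card_mono[rotated]) auto
  then show ?thesis by (simp add: card_image_triple_list card_cartesian_product card_words)
qed

lemma is_prefix_code_3_iff:
  assumes "length u \<le> length v" "length v \<le> length w"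
  shows "is_prefix_code [u, v, w] \<longleftrightarrow> \<not> prefix u v \<and> \<not> prefix u w \<and> \<not> prefix v w"
proof -
  have "\<not> prefix t s" if "length s \<le> length t" "s \<noteq> t" for s t :: "nat list"
    using that by (auto simp: prefix_def)
  then show ?thesis
    using assms unfolding is_prefix_code_def
    by (auto simp: less_Suc_eq numeral_3_eq_3)
qed

lemma PR_sorted_eq_Sigma:
  assumes "0 < a" "a \<le> b" "b \<le> c"
  shows "PR n [a, b, c] = triple_list ` (SIGMA u:words n a. SIGMA v:{v \<in> words n b. \<not> prefix u v}.
    {w \<in> words n c. \<not> prefix u w \<and> \<not> prefix v w})"
proof -
  have "is_code n [u, v, w] \<and> is_prefix_code [u, v, w] \<longleftrightarrow> \<not> prefix u v \<and> \<not> prefix u w \<and> \<not> prefix v w"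
    if "u \<in> words n a" "v \<in> words n b" "w \<in> words n c" for u v w
  proof -
    have "length u = a" "length v = b" "length w = c" "\<forall>t\<in>set [u, v, w]. word_over n t"
      using that by (auto simp: words_def)
    then have "\<forall>t\<in>set [u, v, w]. t \<noteq> []" using assms by auto
    then show ?thesis using \<open>length u = a\<close> \<open>length v = b\<close> \<open>length w = c\<close> assms
        is_prefix_code_3_iff[of u v w] prefix_code_imp_is_code[OF \<open>\<forall>t\<in>set [u, v, w]. word_over n t\<close>]
      by auto
  qed
  then show ?thesis unfolding PR_3_eq by (intro arg_cong[where f = "image triple_list"]) auto
qed

lemma card_words_not_prefix:
  assumes "u \<in> words n a" "a \<le> b"
  shows "card {v \<in> words n b. \<not> prefix u v} = n ^ b - n ^ (b - a)"
proof -
  have "{v \<in> words n b. \<not> prefix u v} = words n b - {v \<in> words n b. prefix u v}" by auto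
  then show ?thesis by (simp add: card_Diff_subset card_words card_words_with_prefix[OF assms])
qed

lemma card_words_not_prefix_2:
  assumes "u \<in> words n a" "v \<in> words n b" "a \<le> b" "b \<le> c" "\<not> prefix u v"
  shows "card {w \<in> words n c. \<not> prefix u w \<and> \<not> prefix v w} = n ^ c - n ^ (c - a) - n ^ (c - b)"
proof -
  let ?E\<^sub>u = "{w \<in> words n c. prefix u w}" and ?E\<^sub>v = "{w \<in> words n c. prefix v w}"
  have "length u \<le> length v" using assms by (simp add: words_def)
  then have "?E\<^sub>u \<inter> ?E\<^sub>v = {}" using assms(5) prefix_length_prefix by blast
  then have "card (?E\<^sub>u \<union> ?E\<^sub>v) = n ^ (c - a) + n ^ (c - b)"
    using card_words_with_prefix[OF assms(1)] card_words_with_prefix[OF assms(2,4)] assms(3,4)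
    by (simp add: card_Un_disjoint)
  moreover have "{w \<in> words n c. \<not> prefix u w \<and> \<not> prefix v w} = words n c - (?E\<^sub>u \<union> ?E\<^sub>v)" by auto
  ultimately show ?thesis by (simp add: card_Diff_subset card_words)
qed

lemma card_PR_sorted:
  assumes "0 < a" "a \<le> b" "b \<le> c"
  shows "card (PR n [a, b, c]) = n ^ a * (n ^ b - n ^ (b - a)) * (n ^ c - n ^ (c - a) - n ^ (c - b))"
proof -
  have "card (PR n [a, b, c]) = (\<Sum>u\<in>words n a. \<Sum>v\<in>{v \<in> words n b. \<not> prefix u v}.
      card {w \<in> words n c. \<not> prefix u w \<and> \<not> prefix v w})"
    unfolding PR_sorted_eq_Sigma[OF assms] card_image_triple_list by (simp add: card_SigmaI)
  also have "\<dots> = (\<Sum>u\<in>words n a. \<Sum>v\<in>{v \<in> words n b. \<not> prefix u v}. n ^ c - n ^ (c - a) - n ^ (c - b))"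
    using card_words_not_prefix_2 assms by (intro sum.cong refl) auto
  also have "\<dots> = n ^ a * (n ^ b - n ^ (b - a)) * (n ^ c - n ^ (c - a) - n ^ (c - b))"
    using card_words_not_prefix assms by (simp add: card_words)
  finally show ?thesis .
qed

lemma real_card_PR_sorted:
  assumes "2 \<le> n" "0 < a" "a \<le> b" "b \<le> c"
  shows "real (card (PR n [a, b, c])) =
    real n ^ a * real n ^ b * real n ^ c * (1 - 1 / real n ^ a) * (1 - 1 / real n ^ a - 1 / real n ^ b)"
proof -
  define N where "N = real n"
  have "N \<noteq> 0" using assms(1) by (simp add: N_def)
  have "n ^ (c - a) \<le> n ^ (c - 1)" "n ^ (c - b) \<le> n ^ (c - 1)"
    using assms by (auto intro: power_increasing)
  moreover have "2 * n ^ (c - 1) \<le> n ^ c"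
    using assms mult_le_mono1[of 2 n "n ^ (c - 1)"] by (simp add: power_eq_if)
  moreover have "n ^ (b - a) \<le> n ^ b" using assms by (intro power_increasing) auto
  ultimately have "real (card (PR n [a, b, c])) = N ^ a * (N ^ b - N ^ (b - a)) * (N ^ c - N ^ (c - a) - N ^ (c - b))"
    unfolding card_PR_sorted[OF assms(2-4)] N_def by (simp add: of_nat_diff)
  also have "\<dots> = N ^ a * (N ^ b - N ^ b / N ^ a) * (N ^ c - N ^ c / N ^ a - N ^ c / N ^ b)"
    using assms \<open>N \<noteq> 0\<close> by (simp add: power_diff)
  also have "\<dots> = N ^ a * N ^ b * N ^ c * (1 - 1 / N ^ a) * (1 - 1 / N ^ a - 1 / N ^ b)"
    using \<open>N \<noteq> 0\<close> by (simp add: field_simps)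
  finally show ?thesis unfolding N_def .
qed

section \<open>Codes with short first words\<close>

lemma words_Suc_0_iff: "u \<in> words n (Suc 0) \<longleftrightarrow> (\<exists>x. u = [x] \<and> x < n)"
  by (auto simp: words_def word_over_def length_Suc_conv)

lemma letters_in_star: "set q \<subseteq> {x, y} \<Longrightarrow> q \<in> star {[x], [y]}"
proof (induction q)
  case (Cons a q)
  then have "[a] \<in> star {[x], [y]}" "q \<in> star {[x], [y]}" by (auto intro: in_star_if_in)
  from append_in_star[OF this] show ?case by simp
qed simp

lemma not_is_code_letters:
  assumes "w \<noteq> []" "set w \<subseteq> {x, y}"
  shows "\<not> is_code n [[x], [y], w]"
proof
  let ?js = "map (\<lambda>ch. if ch = x then 0 else 1 :: nat) w"
  assume "is_code n [[x], [y], w]"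
  moreover have "concat (map ((!) [[x], [y], w]) (map (\<lambda>ch. if ch = x then 0 else 1) q)) = q"
    if "set q \<subseteq> {x, y}" for q
    using that by (induction q) auto
  then have "concat (map ((!) [[x], [y], w]) ?js) = w" using assms(2) .
  ultimately have "?js = [2]" using assms(1) by (intro is_code_single_factorization) auto
  then have "2 \<in> set ?js" by simp
  then show False by auto
qed

lemma not_is_code_square: "\<not> is_code n [u, u @ u, w]"
  using is_code_single_factorization[of n "[u, u @ u, w]" 1 "[0, 0]"] by auto

lemma card_words_not_over_2:
  assumes "x < n" "y < n" "x \<noteq> y"
  shows "card {w \<in> words n c. \<not> set w \<subseteq> {x, y}} = n ^ c - 2 ^ c"
proof -
  have "{w. set w \<subseteq> {x, y} \<and> length w = c} \<subseteq> words n c" using assms by (auto simp: words_eq)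
  moreover have "card {w. set w \<subseteq> {x, y} \<and> length w = c} = 2 ^ c"
    using assms by (subst card_lists_length_eq) (auto simp: numeral_2_eq_2)
  moreover have "{w \<in> words n c. \<not> set w \<subseteq> {x, y}} = words n c - {w. set w \<subseteq> {x, y} \<and> length w = c}"
    by (auto simp: words_def)
  ultimately show ?thesis by (simp add: card_Diff_subset card_words finite_lists_length_eq)
qed

lemma is_code_letters_word:
  assumes "x < n" "y < n" "x \<noteq> y" "w \<in> words n c" "\<not> set w \<subseteq> {x, y}"
  shows "is_code n [[x], [y], w]"
proof -
  let ?P = "\<lambda>ch. ch \<in> {x, y}"
  obtain r\<^sub>0 rs where r: "dropWhile ?P w = r\<^sub>0 # rs" "\<not> ?P r\<^sub>0"
    using assms(5) by (metis (no_types, lifting) dropWhile_eq_Nil_conv hd_dropWhile list.collapse subsetI)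
  have "set (takeWhile ?P w) \<subseteq> {x, y}" by (auto dest: set_takeWhileD)
  interpret pair_extension "[x]" "[y]" "takeWhile ?P w" "dropWhile ?P w"
    using assms(3) r letters_in_star[OF \<open>set (takeWhile ?P w) \<subseteq> {x, y}\<close>] by unfold_locales auto
  show ?thesis
    using is_code_extension assms(1,2,4) by (simp add: words_def word_over_def)
qed

lemma is_code_1_1_iff:
  assumes "u \<in> words n 1" "v \<in> words n 1" "w \<in> words n c" "0 < c"
  shows "is_code n [u, v, w] \<longleftrightarrow> v \<noteq> u \<and> \<not> set w \<subseteq> set u \<union> set v"
proof -
  obtain x y where xy: "u = [x]" "v = [y]" "x < n" "y < n" using assms(1,2) by (auto simp: words_Suc_0_iff One_nat_def)
  have "w \<noteq> []" using assms(3,4) by (auto simp: words_def)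
  show ?thesis
  proof
    assume code: "is_code n [u, v, w]"
    then show "v \<noteq> u \<and> \<not> set w \<subseteq> set u \<union> set v"
      using is_code_imp_distinct[OF code] not_is_code_letters[OF \<open>w \<noteq> []\<close>] xy by auto
  next
    assume "v \<noteq> u \<and> \<not> set w \<subseteq> set u \<union> set v"
    then show "is_code n [u, v, w]" using is_code_letters_word[of x n y w c] xy assms(3) by auto
  qed
qed

lemma UD_1_1_eq_Sigma:
  assumes "0 < c"
  shows "UD n [1, 1, c] = triple_list ` (SIGMA u:words n 1. SIGMA v:{v \<in> words n 1. v \<noteq> u}.
    {w \<in> words n c. \<not> set w \<subseteq> set u \<union> set v})"
  unfolding UD_3_eq using is_code_1_1_iff[OF _ _ _ assms]
  by (intro arg_cong[where f = "image triple_list"]) auto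

lemma card_UD_1_1:
  assumes "0 < c"
  shows "card (UD n [1, 1, c]) = n * (n - 1) * (n ^ c - 2 ^ c)"
proof -
  have "card (UD n [1, 1, c]) = (\<Sum>u\<in>words n 1. \<Sum>v\<in>{v \<in> words n 1. v \<noteq> u}.
      card {w \<in> words n c. \<not> set w \<subseteq> set u \<union> set v})"
    unfolding UD_1_1_eq_Sigma[OF assms] card_image_triple_list by (simp add: card_SigmaI)
  also have "\<dots> = (\<Sum>u\<in>words n 1. \<Sum>v\<in>{v \<in> words n 1. v \<noteq> u}. n ^ c - 2 ^ c)"
  proof (intro sum.cong refl)
    fix u v assume "u \<in> words n 1" "v \<in> {v \<in> words n 1. v \<noteq> u}"
    then obtain x y where "u = [x]" "v = [y]" "x < n" "y < n" "x \<noteq> y" by (auto simp: words_Suc_0_iff One_nat_def)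
    then show "card {w \<in> words n c. \<not> set w \<subseteq> set u \<union> set v} = n ^ c - 2 ^ c"
      using card_words_not_over_2 by simp
  qed
  also have "\<dots> = n * (n - 1) * (n ^ c - 2 ^ c)"
  proof -
    have "{v \<in> words n 1. v \<noteq> u} = words n 1 - {u}" for u by auto
    then show ?thesis by (simp add: card_words)
  qed
  finally show ?thesis .
qed

lemma card_UD_1_2_le: "card (UD n [1, 2, c]) \<le> n * (n ^ 2 - 1) * n ^ c"
proof -
  let ?S = "SIGMA u:words n 1. SIGMA v:{v \<in> words n 2. v \<noteq> u @ u}. words n c"
  have "UD n [1, 2, c] \<subseteq> triple_list ` ?S"
    unfolding UD_3_eq using not_is_code_square by (intro image_mono) auto
  then have "card (UD n [1, 2, c]) \<le> card (triple_list ` ?S)" by (rule card_mono[rotated]) auto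
  also have "\<dots> = card ?S" by (rule card_image_triple_list)
  also have "card ?S = n * (n ^ 2 - 1) * n ^ c"
  proof -
    have "card {v \<in> words n 2. v \<noteq> u @ u} = n ^ 2 - 1" if "u \<in> words n 1" for u
    proof -
      have "u @ u \<in> words n 2" using that by (auto simp: words_def word_over_def)
      moreover have "{v \<in> words n 2. v \<noteq> u @ u} = words n 2 - {u @ u}" by auto
      ultimately show ?thesis by (simp add: card_words)
    qed
    then show ?thesis by (simp add: card_SigmaI card_words)
  qed
  finally show ?thesis .
qed

lemma star_pair_decomposition:
  assumes "set w \<subseteq> {x, b}"
  shows "w \<in> star {[x], [b, s]} \<or> (\<exists>q\<in>star {[x], [b, s]}. w = q @ [b]) \<or>
    (\<exists>q s' rest. q \<in> star {[x], [b, s]} \<and> w = q @ b # s' # rest \<and> s' \<noteq> s)"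
  (is "?P w")
  using assms
proof (induction "length w" arbitrary: w rule: less_induct)
  case less
  have prepend: "?P (k @ w')" if "k \<in> {[x], [b, s]}" "?P w'" for k w'
  proof -
    have "k @ q \<in> star {[x], [b, s]}" if "q \<in> star {[x], [b, s]}" for q
      using append_in_star[OF in_star_if_in that] \<open>k \<in> {[x], [b, s]}\<close> by blast
    then show ?thesis using \<open>?P w'\<close> by (metis append.assoc)
  qed
  show ?case
  proof (cases w)
    case (Cons a w')
    consider "a = x" | "a = b" "w' = []" | s' w'' where "a = b" "w' = s' # w''"
      using Cons less.prems by (cases w') auto
    then show ?thesis
    proof cases
      case 1
      then show ?thesis using prepend[of "[x]" w'] less Cons by simp
    next
      case 2
      then show ?thesis using Cons by (intro disjI2 disjI1 bexI[of _ "[]"]) auto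
    next
      case (3 s' w'')
      show ?thesis
      proof (cases "s' = s")
        case True
        then show ?thesis using prepend[of "[b, s]" w''] less Cons 3 by simp
      next
        case False
        then show ?thesis using Cons 3 by (intro disjI2 exI[of _ "[]"]) auto
      qed
    qed
  qed simp
qed

lemma is_code_binary_mismatch:
  assumes "x \<noteq> b" "s \<in> {x, b}" "q \<in> star {[x], [b, s]}" "s' \<noteq> s"
    and "word_over n [x, b]" "word_over n (q @ b # s' # rest)"
  shows "is_code n [[x], [b, s], q @ b # s' # rest]"
proof -
  interpret pair_extension "[x]" "[b, s]" q "b # s' # rest"
    using assms(1-4) by unfold_locales auto
  show ?thesis using is_code_extension assms(2,5,6) by (auto simp: word_over_def)
qed

lemma finite_star_length: "finite {w \<in> star {[x], [b, s]}. length w = m}"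
proof (rule finite_subset)
  show "{w \<in> star {[x], [b, s]}. length w = m} \<subseteq> {w. set w \<subseteq> {x, b, s} \<and> length w = m}"
    using set_star_subset by fastforce
qed (simp add: finite_lists_length_eq)

text \<open>The count satisfies the Fibonacci recursion, and \<open>(7/4)\<^sup>2 \<ge> 7/4 + 1\<close>.\<close>
lemma card_star_length_le: "real (card {w \<in> star {[x], [b, s]}. length w = m}) \<le> (7 / 4) ^ m"
proof -
  let ?S = "\<lambda>m. {w \<in> star {[x], [b, s]}. length w = m}"
  have step: "card (?S (Suc (Suc m))) \<le> card (?S (Suc m)) + card (?S m)" for m
  proof -
    have "?S (Suc (Suc m)) \<subseteq> (\<lambda>w. [x] @ w) ` ?S (Suc m) \<union> (\<lambda>w. [b, s] @ w) ` ?S m"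
      by (auto elim: star_cases)
    then have "card (?S (Suc (Suc m))) \<le> card ((\<lambda>w. [x] @ w) ` ?S (Suc m) \<union> (\<lambda>w. [b, s] @ w) ` ?S m)"
      by (rule card_mono[rotated]) (auto intro: finite_star_length)
    also have "\<dots> \<le> card (?S (Suc m)) + card (?S m)"
      by (intro card_Un_le[THEN order_trans] add_mono card_image_le finite_star_length)
    finally show ?thesis .
  qed
  have "?S 0 \<subseteq> {[]}" "?S 1 \<subseteq> {[x]}" by (auto elim: star_cases)
  then have base: "card (?S 0) \<le> 1" "card (?S 1) \<le> 1"
    using card_mono[of "{[]}" "?S 0"] card_mono[of "{[x]}" "?S 1"] by auto
  have "real (card (?S m)) \<le> (7 / 4) ^ m \<and> real (card (?S (Suc m))) \<le> (7 / 4) ^ Suc m" for m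
  proof (induction m)
    case 0
    then show ?case using base by simp
  next
    case (Suc m)
    have "real (card (?S (Suc (Suc m)))) \<le> (7 / 4) ^ Suc m + (7 / 4) ^ m"
      using step[of m] Suc by linarith
    also have "\<dots> \<le> (7 / 4) ^ Suc (Suc m)" by simp
    finally show ?case using Suc by simp
  qed
  then show ?thesis by blast
qed

lemma binary_non_extensions_subset:
  assumes "x \<noteq> b" "x < 2" "b < 2" "s \<in> {x, b}"
  shows "{w \<in> words 2 c. \<not> is_code 2 [[x], [b, s], w]} \<subseteq>
    {w \<in> star {[x], [b, s]}. length w = c} \<union> (\<lambda>q. q @ [b]) ` {q \<in> star {[x], [b, s]}. length q = c - 1}"
proof
  fix w assume w: "w \<in> {w \<in> words 2 c. \<not> is_code 2 [[x], [b, s], w]}"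
  have "ch = x \<or> ch = b" if "ch < 2" for ch :: nat using that assms(1-3) by linarith
  then have len: "length w = c" and "set w \<subseteq> {x, b}" using w by (auto simp: words_def word_over_def)
  moreover have "\<nexists>q s' rest. q \<in> star {[x], [b, s]} \<and> w = q @ b # s' # rest \<and> s' \<noteq> s"
    using is_code_binary_mismatch[of x b s _ _ 2] assms w by (auto simp: words_def word_over_def)
  ultimately show "w \<in> {w \<in> star {[x], [b, s]}. length w = c} \<union>
      (\<lambda>q. q @ [b]) ` {q \<in> star {[x], [b, s]}. length q = c - 1}"
    using star_pair_decomposition[of w x b s] by fastforce
qed

lemma card_binary_extensions_ge:
  assumes "x \<noteq> b" "x < 2" "b < 2" "s \<in> {x, b}"
  shows "2 ^ c - 2 * (7 / 4) ^ c \<le> real (card {w \<in> words 2 c. is_code 2 [[x], [b, s], w]})"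
proof -
  let ?S = "\<lambda>m. {w \<in> star {[x], [b, s]}. length w = m}"
  let ?N = "?S c \<union> (\<lambda>q. q @ [b]) ` ?S (c - 1)"
  have "words 2 c - ?N \<subseteq> {w \<in> words 2 c. is_code 2 [[x], [b, s], w]}"
    using binary_non_extensions_subset[OF assms, of c] by blast
  then have "card (words 2 c - ?N) \<le> card {w \<in> words 2 c. is_code 2 [[x], [b, s], w]}"
    by (rule card_mono[rotated]) simp
  moreover have "card (words 2 c) - card ?N \<le> card (words 2 c - ?N)"
    by (rule diff_card_le_card_Diff) (simp add: finite_star_length)
  ultimately have "real (card (words 2 c)) \<le>
      real (card {w \<in> words 2 c. is_code 2 [[x], [b, s], w]}) + real (card ?N)"
    by linarith
  moreover have "card ?N \<le> card (?S c) + card (?S (c - 1))"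
    using card_Un_le[of "?S c" "(\<lambda>q. q @ [b]) ` ?S (c - 1)"]
      card_image_le[OF finite_star_length, of "\<lambda>q. q @ [b]" x b s "c - 1"]
    by linarith
  then have "real (card ?N) \<le> real (card (?S c)) + real (card (?S (c - 1)))"
    using of_nat_mono by fastforce
  moreover have "(7 / 4 :: real) ^ (c - 1) \<le> (7 / 4) ^ c" by (intro power_increasing) auto
  moreover have "real (card (words 2 c)) = 2 ^ c" by (simp add: card_words)
  ultimately show ?thesis
    using card_star_length_le[of x b s c] card_star_length_le[of x b s "c - 1"] by linarith
qed

lemma card_binary_extensions_rev_ge:
  assumes "x \<noteq> b" "x < 2" "b < 2"
  shows "2 ^ c - 2 * (7 / 4) ^ c \<le> real (card {w \<in> words 2 c. is_code 2 [[x], [x, b], w]})"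
proof -
  have "rev ` {w \<in> words 2 c. is_code 2 [[x], [b, x], w]} \<subseteq> {w \<in> words 2 c. is_code 2 [[x], [x, b], w]}"
    using is_code_map_rev[of 2 "[[x], [b, x], _]"] by (auto simp: words_def word_over_def)
  then have "card (rev ` {w \<in> words 2 c. is_code 2 [[x], [b, x], w]}) \<le> card {w \<in> words 2 c. is_code 2 [[x], [x, b], w]}"
    by (rule card_mono[rotated]) simp
  moreover have "inj_on rev A" for A :: "nat list set" by (auto intro: inj_onI)
  ultimately show ?thesis
    using card_binary_extensions_ge[of x b x c] assms by (simp add: card_image)
qed

lemma binary_words_2_cases:
  assumes "v \<in> words 2 2" "x < 2"
  shows "v \<in> {[x, x], [1 - x, 1 - x], [1 - x, x], [x, 1 - x]}"
proof -
  obtain v\<^sub>0 v\<^sub>1 where "v = [v\<^sub>0, v\<^sub>1]" "v\<^sub>0 < 2" "v\<^sub>1 < 2"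
    using assms(1) by (auto simp: words_def word_over_def numeral_2_eq_2 length_Suc_conv)
  then show ?thesis using assms(2) by auto
qed

lemma card_UD_1_2_binary_ge:
  "6 * (2 ^ c - 2 * (7 / 4) ^ c) \<le> real (card (UD 2 [1, 2, c]))"
proof -
  let ?G = "\<lambda>u v. {w \<in> words 2 c. is_code 2 [u, v, w]}"
  let ?S = "SIGMA u:words 2 1. SIGMA v:{v \<in> words 2 2. v \<noteq> u @ u}. ?G u v"
  have "card {v \<in> words 2 2. v \<noteq> u @ u} = 3" if "u \<in> words 2 1" for u
  proof -
    have "u @ u \<in> words 2 2" using that by (auto simp: words_def word_over_def)
    moreover have "{v \<in> words 2 2. v \<noteq> u @ u} = words 2 2 - {u @ u}" by auto
    ultimately show ?thesis by (simp add: card_words)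
  qed
  then have "6 * (2 ^ c - 2 * (7 / 4) ^ c) =
      (\<Sum>u\<in>words 2 1. \<Sum>v\<in>{v \<in> words 2 2. v \<noteq> u @ u}. 2 ^ c - 2 * (7 / 4 :: real) ^ c)"
    by (simp add: card_words)
  also have "\<dots> \<le> (\<Sum>u\<in>words 2 1. \<Sum>v\<in>{v \<in> words 2 2. v \<noteq> u @ u}. real (card (?G u v)))"
  proof (intro sum_mono)
    fix u v assume u: "u \<in> words 2 1" and v: "v \<in> {v \<in> words 2 2. v \<noteq> u @ u}"
    obtain x where x: "u = [x]" "x < 2" using u by (auto simp: words_Suc_0_iff One_nat_def)
    have "x \<noteq> 1 - x" "1 - x < 2" using x(2) by arith+
    moreover have "v \<in> {[1 - x, 1 - x], [1 - x, x], [x, 1 - x]}"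
      using binary_words_2_cases[of v x] u v x by auto
    ultimately show "2 ^ c - 2 * (7 / 4) ^ c \<le> real (card (?G u v))"
      using card_binary_extensions_ge[of x "1 - x" "1 - x" c] card_binary_extensions_ge[of x "1 - x" x c]
        card_binary_extensions_rev_ge[of x "1 - x" c] x by auto
  qed
  also have "\<dots> = real (card ?S)" by (simp add: card_SigmaI)
  also have "\<dots> \<le> real (card (UD 2 [1, 2, c]))"
  proof -
    have "triple_list ` ?S \<subseteq> UD 2 [1, 2, c]" unfolding UD_3_eq by auto
    then have "card (triple_list ` ?S) \<le> card (UD 2 [1, 2, c])" by (intro card_mono finite_UD_3)
    then have "card ?S \<le> card (UD 2 [1, 2, c])" by (simp only: card_image_triple_list)
    then show ?thesis by (rule of_nat_mono)
  qed
  finally show ?thesis .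
qed

section \<open>Bounds on \<open>rho\<close>\<close>

lemma rho_ge_of_card_UD_le:
  assumes "UD n L \<noteq> {}" "finite (UD n L)" "real (card (UD n L)) \<le> U"
  shows "real (card (PR n L)) / U \<le> rho n L"
proof -
  have "0 < real (card (UD n L))" using assms(1,2) by (simp add: card_gt_0_iff)
  then show ?thesis unfolding rho_def using assms(3) by (intro divide_left_mono) auto
qed

lemma rho_sorted_ge_product:
  assumes "2 \<le> n" "0 < a" "a \<le> b" "b \<le> c" "UD n [a, b, c] \<noteq> {}"
  shows "(1 - 1 / real n ^ a) * (1 - 1 / real n ^ a - 1 / real n ^ b) \<le> rho n [a, b, c]"
proof -
  have "real (card (UD n [a, b, c])) \<le> real n ^ a * real n ^ b * real n ^ c"
    using card_UD_3_le[of n a b c] by (metis of_nat_le_iff of_nat_mult of_nat_power)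
  with assms(5) finite_UD_3
  have "real (card (PR n [a, b, c])) / (real n ^ a * real n ^ b * real n ^ c) \<le> rho n [a, b, c]"
    by (rule rho_ge_of_card_UD_le)
  then show ?thesis using assms(1) by (simp add: real_card_PR_sorted[OF assms(1-4)])
qed

lemma card_PR_1_1:
  assumes "2 \<le> n" "0 < c"
  shows "real (card (PR n [1, 1, c])) = real n ^ c * (real n - 1) * (real n - 2)"
  using assms by (simp add: real_card_PR_sorted field_simps)

lemma rho_1_1:
  assumes "3 \<le> n" "0 < c"
  shows "rho n [1, 1, c] = (real n - 2) / real n / (1 - (2 / real n) ^ c)"
proof -
  define N where "N = real n"
  have "N \<ge> 3" using assms(1) by (simp add: N_def)
  have "(2 :: real) ^ c < N ^ c" using \<open>N \<ge> 3\<close> assms(2) by (intro power_strict_mono) auto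
  have "2 ^ c \<le> n ^ c" using assms(1) by (intro power_mono) auto
  then have "real (card (UD n [1, 1, c])) = N * (N - 1) * (N ^ c - 2 ^ c)"
    using card_UD_1_1[OF assms(2), of n] assms(1) by (simp add: N_def of_nat_diff)
  moreover have "real (card (PR n [1, 1, c])) = N ^ c * (N - 1) * (N - 2)"
    using card_PR_1_1[of n c] assms by (simp add: N_def)
  ultimately have "rho n [1, 1, c] = N ^ c * (N - 1) * (N - 2) / (N * (N - 1) * (N ^ c - 2 ^ c))"
    unfolding rho_def by simp
  also have "\<dots> = (N - 2) / N / (1 - 2 ^ c / N ^ c)"
  proof -
    have "N ^ c - 2 ^ c \<noteq> 0" "N ^ c \<noteq> 0" "N - 1 \<noteq> 0" using \<open>N \<ge> 3\<close> \<open>2 ^ c < N ^ c\<close> by auto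
    then have "1 - 2 ^ c / N ^ c = (N ^ c - 2 ^ c) / N ^ c" by (simp add: diff_divide_distrib)
    then show ?thesis using \<open>N - 1 \<noteq> 0\<close> by (simp add: mult.commute mult.left_commute)
  qed
  also have "\<dots> = (N - 2) / N / (1 - (2 / N) ^ c)" by (simp add: power_divide)
  finally show ?thesis unfolding N_def .
qed

lemma card_PR_1_2_binary:
  assumes "2 \<le> c"
  shows "real (card (PR 2 [1, 2, c])) = 2 ^ c"
  using real_card_PR_sorted[of 2 1 2 c] assms by (simp add: field_simps)

lemma rho_1_2_binary_ge:
  assumes "2 \<le> c" "UD 2 [1, 2, c] \<noteq> {}"
  shows "1 / 6 \<le> rho 2 [1, 2, c]"
proof -
  have "real (card (UD 2 [1, 2, c])) \<le> 6 * 2 ^ c"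
  proof -
    have "card (UD 2 [1, 2, c]) \<le> 6 * 2 ^ c" using card_UD_1_2_le[of 2 c] by simp
    then show ?thesis using of_nat_mono by fastforce
  qed
  with assms(2) finite_UD_3 have "real (card (PR 2 [1, 2, c])) / (6 * 2 ^ c) \<le> rho 2 [1, 2, c]"
    by (rule rho_ge_of_card_UD_le)
  then show ?thesis using card_PR_1_2_binary[OF assms(1)] by simp
qed

lemma rho_1_2_binary_le:
  assumes "2 \<le> c" "2 * (7 / 8) ^ c < (1 :: real)"
  shows "UD 2 [1, 2, c] \<noteq> {}" "rho 2 [1, 2, c] \<le> 1 / (6 * (1 - 2 * (7 / 8) ^ c))"
proof -
  have "(7 / 4 :: real) ^ c = 2 ^ c * (7 / 8) ^ c" by (simp add: power_mult_distrib[symmetric])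
  then have U: "6 * 2 ^ c * (1 - 2 * (7 / 8) ^ c) \<le> real (card (UD 2 [1, 2, c]))"
    using card_UD_1_2_binary_ge[of c] by (simp add: algebra_simps)
  moreover have pos: "0 < 6 * 2 ^ c * (1 - 2 * (7 / 8 :: real) ^ c)" using assms(2) by simp
  ultimately show "UD 2 [1, 2, c] \<noteq> {}" by auto
  have "rho 2 [1, 2, c] \<le> 2 ^ c / (6 * 2 ^ c * (1 - 2 * (7 / 8) ^ c))"
    unfolding rho_def card_PR_1_2_binary[OF assms(1)] using U pos by (intro divide_left_mono) auto
  then show "rho 2 [1, 2, c] \<le> 1 / (6 * (1 - 2 * (7 / 8) ^ c))" by simp
qed

lemma alpha_le_one_minus_3_div_sq: "2 \<le> n \<Longrightarrow> alpha n \<le> 1 - 3 / real n ^ 2"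
  by (cases "n = 2") (auto simp: alpha_def field_simps power2_eq_square)

lemma alpha_le_rho_1_1:
  assumes "3 \<le> n" "0 < c"
  shows "alpha n \<le> rho n [1, 1, c]"
proof -
  define p t where "p = (real n - 2) / real n" and "t = (2 / real n) ^ c"
  have "0 < p" "0 < t" "t < 1" using assms by (auto simp: p_def t_def power_less_one_iff)
  then have "p * (1 - t) \<le> p" by (intro mult_left_le) auto
  then have "p \<le> p / (1 - t)" using \<open>t < 1\<close> by (intro mult_imp_le_div_pos) auto
  then show ?thesis using rho_1_1[OF assms] assms(1) by (simp add: alpha_def p_def t_def)
qed

lemma alpha_le_sorted_product:
  assumes n: "2 \<le> n" and "0 < a" "a \<le> b" "2 \<le> b" and binary: "n = 2 \<and> a = 1 \<Longrightarrow> 3 \<le> b"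
  shows "alpha n \<le> (1 - 1 / real n ^ a) * (1 - 1 / real n ^ a - 1 / real n ^ b)"
proof -
  define N where "N = real n"
  have "N \<ge> 2" using n by (simp add: N_def)
  define x y where "x = 1 / N ^ a" and "y = 1 / N ^ b"
  have "0 < x" "0 < y" using \<open>N \<ge> 2\<close> by (simp_all add: x_def y_def)
  have y_le: "y \<le> 1 / N ^ k" if "k \<le> b" for k
    using that \<open>N \<ge> 2\<close> unfolding y_def by (intro divide_left_mono power_increasing) auto
  consider "2 \<le> a" | "a = 1" "n = 2" | "a = 1" "3 \<le> n"
    using assms by linarith
  then have "alpha n \<le> (1 - x) * (1 - x - y)"
  proof cases
    case 1
    then have "x \<le> 1 / N ^ 2" "y \<le> x"
      using assms \<open>N \<ge> 2\<close> unfolding x_def y_def by (auto intro!: divide_left_mono power_increasing)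
    moreover have "0 \<le> x * (x + y)" using \<open>0 < x\<close> \<open>0 < y\<close> by simp
    moreover have "3 / N ^ 2 = 3 * (1 / N ^ 2)" by simp
    ultimately have "1 - 3 / N ^ 2 \<le> (1 - x) * (1 - x - y)" by (simp add: algebra_simps)
    then show ?thesis using alpha_le_one_minus_3_div_sq[OF n] by (simp add: N_def)
  next
    case 2
    then have x_half: "x = 1 / 2" and "y \<le> 1 / 8" using y_le[of 3] binary by (simp_all add: x_def N_def)
    have "(1 - x) * (1 - x - y) = 1 / 4 - y / 2" unfolding x_half by (simp add: algebra_simps)
    then show ?thesis using \<open>y \<le> 1 / 8\<close> 2 by (simp add: alpha_def)
  next
    case 3
    then have x_inv: "x = 1 / N" and "y \<le> 1 / N ^ 2" and "N \<ge> 3"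
      using y_le[of 2] assms by (simp_all add: x_def N_def)
    have "(1 - x) * y \<le> (1 - x) * (1 / N ^ 2)"
      using \<open>y \<le> 1 / N ^ 2\<close> \<open>N \<ge> 3\<close> unfolding x_inv by (intro mult_left_mono) auto
    moreover have "(1 - x) * (1 - x) - (1 - x) * (1 / N ^ 2) = 1 - 2 / N + 1 / N ^ 3"
      using \<open>N \<ge> 3\<close> unfolding x_inv by (simp add: field_simps power2_eq_square power3_eq_cube)
    moreover have "0 < 1 / N ^ 3" using \<open>N \<ge> 3\<close> by simp
    moreover have "(1 - x) * (1 - x - y) = (1 - x) * (1 - x) - (1 - x) * y" by (simp add: algebra_simps)
    moreover have "alpha n = 1 - 2 / N" using \<open>N \<ge> 3\<close> by (simp add: alpha_def N_def diff_divide_distrib)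
    ultimately show ?thesis by linarith
  qed
  then show ?thesis by (simp add: x_def y_def N_def)
qed

lemma alpha_le_rho_sorted:
  assumes "2 \<le> n" "0 < a" "a \<le> b" "b \<le> c" and UD: "UD n [a, b, c] \<noteq> {}"
  shows "alpha n \<le> rho n [a, b, c]"
proof -
  consider "a = 1" "b = 1" | "n = 2" "a = 1" "b = 2" | "2 \<le> b" "n = 2 \<and> a = 1 \<Longrightarrow> 3 \<le> b"
    using assms(2,3) by linarith
  then show ?thesis
  proof cases
    case 1
    have "n \<noteq> 2" using UD card_UD_1_1[of c 2] finite_UD_3 assms 1 by auto
    then show ?thesis using alpha_le_rho_1_1[of n c] assms 1 by simp
  next
    case 2
    then show ?thesis using rho_1_2_binary_ge[of c] UD assms by (simp add: alpha_def)
  next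
    case 3
    then show ?thesis
      using alpha_le_sorted_product[OF assms(1-3)] rho_sorted_ge_product[OF assms] by fastforce
  qed
qed

lemma
  shows rho_swap_12: "rho n [b, a, c] = rho n [a, b, c]"
    and UD_swap_12_empty_iff: "UD n [b, a, c] = {} \<longleftrightarrow> UD n [a, b, c] = {}"
  using rho_permute_involution[of "[1, 0, 2]" "[a, b, c]" n]
    UD_permute_involution_empty_iff[of "[1, 0, 2]" "[a, b, c]" n]
  by (simp_all add: less_Suc_eq numeral_3_eq_3 nth_Cons')

lemma
  shows rho_swap_23: "rho n [a, c, b] = rho n [a, b, c]"
    and UD_swap_23_empty_iff: "UD n [a, c, b] = {} \<longleftrightarrow> UD n [a, b, c] = {}"
  using rho_permute_involution[of "[0, 2, 1]" "[a, b, c]" n]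
    UD_permute_involution_empty_iff[of "[0, 2, 1]" "[a, b, c]" n]
  by (simp_all add: less_Suc_eq numeral_3_eq_3 nth_Cons')

lemma alpha_le_rho:
  assumes "2 \<le> n" "length L = 3" "\<forall>a\<in>set L. 0 < a" "UD n L \<noteq> {}"
  shows "alpha n \<le> rho n L"
proof -
  obtain a b c where L: "L = [a, b, c]"
    using assms(2) by (auto simp: numeral_3_eq_3 length_Suc_conv)
  have "(\<forall>x\<in>set [a, b, c]. 0 < x) \<longrightarrow> UD n [a, b, c] \<noteq> {} \<longrightarrow> alpha n \<le> rho n [a, b, c]"
  proof (rule sorted_triple_wlog)
    fix a b c :: nat assume "a \<le> b" "b \<le> c"
    then show "(\<forall>x\<in>set [a, b, c]. 0 < x) \<longrightarrow> UD n [a, b, c] \<noteq> {} \<longrightarrow> alpha n \<le> rho n [a, b, c]"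
      using alpha_le_rho_sorted[OF assms(1)] by simp
  qed (auto simp: rho_swap_12 UD_swap_12_empty_iff rho_swap_23 UD_swap_23_empty_iff)
  then show ?thesis using assms(3,4) L by simp
qed

lemma INF_eq_if_lower_bound_tendsto:
  fixes f :: "'a \<Rightarrow> real"
  assumes lower: "\<And>x. x \<in> S \<Longrightarrow> a \<le> f x"
    and approx: "\<forall>\<^sub>F k in sequentially. X k \<in> S \<and> f (X k) \<le> u k" and "u \<longlonglongrightarrow> a"
  shows "(INF x\<in>S. f x) = a"
proof (rule antisym)
  obtain k where "X k \<in> S" using eventually_happens'[OF _ approx] by auto
  then show "a \<le> (INF x\<in>S. f x)" using lower by (intro cINF_greatest) auto
  have "bdd_below (f ` S)" using lower by (rule bdd_belowI2)
  have "\<forall>\<^sub>F k in sequentially. (INF x\<in>S. f x) \<le> u k"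
    using approx by eventually_elim (meson \<open>bdd_below (f ` S)\<close> cINF_lower order_trans)
  with \<open>u \<longlonglongrightarrow> a\<close> show "(INF x\<in>S. f x) \<le> a" by (rule tendsto_lowerbound) simp
qed

lemma UD_1_1_nonempty:
  assumes "3 \<le> n" "0 < c"
  shows "UD n [1, 1, c] \<noteq> {}"
proof -
  have "2 ^ c < n ^ c" using assms by (intro power_strict_mono) auto
  then have "0 < card (UD n [1, 1, c])" using card_UD_1_1[OF assms(2)] assms(1) by simp
  then show ?thesis by auto
qed

lemma rho_1_1_tendsto:
  assumes "3 \<le> n"
  shows "(\<lambda>k. rho n [1, 1, Suc k]) \<longlonglongrightarrow> alpha n"
proof -
  have "(\<lambda>k. (2 / real n) ^ Suc k) \<longlonglongrightarrow> 0"
    using assms by (intro LIMSEQ_Suc[OF LIMSEQ_power_zero]) simp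
  then have "(\<lambda>k. (real n - 2) / real n / (1 - (2 / real n) ^ Suc k)) \<longlonglongrightarrow> (real n - 2) / real n / (1 - 0)"
    by (intro tendsto_intros) auto
  then show ?thesis using rho_1_1[OF assms] assms by (simp add: alpha_def)
qed

lemma rho_1_2_binary_approx:
  shows "\<forall>\<^sub>F k in sequentially. UD 2 [1, 2, k] \<noteq> {} \<and> rho 2 [1, 2, k] \<le> 1 / (6 * (1 - 2 * (7 / 8) ^ k))"
    and "(\<lambda>k. 1 / (6 * (1 - 2 * (7 / 8) ^ k))) \<longlonglongrightarrow> alpha 2"
proof -
  have "(\<lambda>k. 2 * (7 / 8 :: real) ^ k) \<longlonglongrightarrow> 0"
    using tendsto_mult_right_zero[OF LIMSEQ_power_zero, of "7 / 8 :: real" 2] by simp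
  then have "\<forall>\<^sub>F k in sequentially. 2 * (7 / 8 :: real) ^ k < 1" by (rule order_tendstoD) simp
  then show "\<forall>\<^sub>F k in sequentially. UD 2 [1, 2, k] \<noteq> {} \<and> rho 2 [1, 2, k] \<le> 1 / (6 * (1 - 2 * (7 / 8) ^ k))"
    using eventually_ge_at_top[of 2] by eventually_elim (use rho_1_2_binary_le in blast)
  from \<open>(\<lambda>k. 2 * (7 / 8 :: real) ^ k) \<longlonglongrightarrow> 0\<close>
  have "(\<lambda>k. 1 / (6 * (1 - 2 * (7 / 8) ^ k))) \<longlonglongrightarrow> 1 / (6 * (1 - 0 :: real))"
    by (intro tendsto_intros) auto
  then show "(\<lambda>k. 1 / (6 * (1 - 2 * (7 / 8) ^ k))) \<longlonglongrightarrow> alpha 2" by (simp add: alpha_def)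
qed

theorem mainTheorem4:
  fixes n :: nat
  assumes "n \<ge> 2"
  shows "(INF L \<in> {L. length L = 3 \<and> (\<forall>a\<in>set L. 0 < a) \<and> UD n L \<noteq> {}}. rho n L) = alpha n"
proof -
  let ?S = "{L. length L = 3 \<and> (\<forall>a\<in>set L. 0 < a) \<and> UD n L \<noteq> {}}"
  have lower: "alpha n \<le> rho n L" if "L \<in> ?S" for L
    using alpha_le_rho[OF assms] that by blast
  show ?thesis
  proof (cases "n = 2")
    case True
    have "\<forall>\<^sub>F k in sequentially. [1, 2, k] \<in> ?S \<and> rho n [1, 2, k] \<le> 1 / (6 * (1 - 2 * (7 / 8) ^ k))"
      using rho_1_2_binary_approx(1) eventually_ge_at_top[of 1] by eventually_elim (simp add: True)
    from INF_eq_if_lower_bound_tendsto[OF lower this] show ?thesis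
      using rho_1_2_binary_approx(2) True by simp
  next
    case False
    then have "\<forall>\<^sub>F k in sequentially. [1, 1, Suc k] \<in> ?S \<and> rho n [1, 1, Suc k] \<le> rho n [1, 1, Suc k]"
      using UD_1_1_nonempty assms by simp
    from INF_eq_if_lower_bound_tendsto[OF lower this] show ?thesis
      using rho_1_1_tendsto False assms by simp
  qed
qed

end
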